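(* For any $\mathbf{z},\mathbf{z}'\in\mathbb{F}_{2^n}^m$ and for $\mathcal{P}=(p_1,\dots,p_m)$ with $p_i\sim\mathcal{P}_i$ independently, where each $\mathcal{P}_i$ is a shift-invariant distribution on $\mathbb{F}_2[X_{i,1},\dots,X_{i,n}]$, $$\mathbb{E}_{\mathcal{P}}\big[|(B*W^{\mathcal{P}})(\mathbf{z})|^2\big]=\mathbb{E}_{\mathcal{P}}\big[|(B*W^{\mathcal{P}})(\mathbf{z}')|^2\big].$$
   Context: Elements of $\mathbb{F}_{2^n}$ are identified with $\mathbb{F}_2^n$ via a fixed basis. For $f:\mathbb{F}_{2^n}^m\to\mathbb{C}$, $\hat f(\mathbf{z})=2^{-nm/2}\sum_{\mathbf{x}}f(\mathbf{x})(-1)^{\mathrm{Tr}(\mathbf{x}\cdot\mathbf{z})}$ (absolute trace). Convolution: $(f*g)(\mathbf{x})=\sum_{\mathbf{y}}f(\mathbf{y})g(\mathbf{x}-\mathbf{y})$. With $\mathcal{R}_i$ the roots of $p_i$ in $\mathbb{F}_2^n$, $\mathcal{R}=\prod_i\mathcal{R}_i$, $W^{\mathcal{P}}(\mathbf{e})=|\mathcal{R}|^{-1/2}$ if $\mathbf{e}\in\mathcal{R}$ and $0$ otherwise. $B:\mathbb{F}_{2^n}^m\to\mathbb{C}$ is the function whose transform $\hat B$ is the indicator of the set $\mathcal{B}=\{\mathbf{e}:\exists\mathbf{x}\in C^\perp,\ \mathsf{Decode}(\mathbf{x}+\mathbf{e})\neq\mathbf{x}\}$, where $C^\perp$ is a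 Reed–Solomon code over $\mathbb{F}_{2^n}$ of length $m$ and $\mathsf{Decode}$ is a fixed decoding map $\mathbb{F}_{2^n}^m\to C^\perp$. A distribution $\mathcal{P}_i$ is shift-invariant if for every $\mathbf{s}\in\mathbb{F}_2^n$, $p(\mathbf{X}+\mathbf{s})$ with $p\sim\mathcal{P}_i$ is distributed as $\mathcal{P}_i$. *)

theory Defs
  imports "HOL-Analysis.Analysis" "HOL-Probability.Probability"
    "HOL-Library.Z2" "HOL-Library.Poly_Mapping" "HOL-Library.Function_Algebras"
    "HOL-Computational_Algebra.Polynomial"
begin

text \<open>Multivariate polynomials over F_2 in the variables X_v (v of a finite type 'v,
  CARD('v) = n), represented as finitely supported maps from monomials
  (exponent vectors 'v =>0 nat) to coefficients in F_2 = bit.\<close>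
type_synonym 'v mpoly2 = "('v \<Rightarrow>\<^sub>0 nat) \<Rightarrow>\<^sub>0 bit"

definition mvar :: "'v \<Rightarrow> 'v mpoly2" where
  "mvar v = Poly_Mapping.single (Poly_Mapping.single v 1) 1"

definition mconst :: "bit \<Rightarrow> 'v mpoly2" where
  "mconst c = Poly_Mapping.single 0 c"

definition mpoly_eval :: "'v mpoly2 \<Rightarrow> ('v \<Rightarrow> bit) \<Rightarrow> bit" where
  "mpoly_eval p x = (\<Sum>mo\<in>Poly_Mapping.keys p. Poly_Mapping.lookup p mo * (\<Prod>v\<in>Poly_Mapping.keys mo. x v ^ Poly_Mapping.lookup mo v))"

definition mpoly_shift :: "('v \<Rightarrow> bit) \<Rightarrow> 'v mpoly2 \<Rightarrow> 'v mpoly2" where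
  "mpoly_shift s p = (\<Sum>mo\<in>Poly_Mapping.keys p. mconst (Poly_Mapping.lookup p mo) *
       (\<Prod>v\<in>Poly_Mapping.keys mo. (mvar v + mconst (s v)) ^ Poly_Mapping.lookup mo v))"

definition mroots :: "'v mpoly2 \<Rightarrow> ('v \<Rightarrow> bit) set" where
  "mroots p = {x. mpoly_eval p x = 0}"

definition shift_invariant :: "'v mpoly2 pmf \<Rightarrow> bool" where
  "shift_invariant D \<longleftrightarrow> (\<forall>s. map_pmf (mpoly_shift s) D = D)"

definition trace2 :: "nat \<Rightarrow> 'f::field \<Rightarrow> 'f" where
  "trace2 n a = (\<Sum>k<n. a ^ (2 ^ k))"

definition chi :: "nat \<Rightarrow> ('i::finite \<Rightarrow> 'f::field) \<Rightarrow> ('i \<Rightarrow> 'f) \<Rightarrow> complex" where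
  "chi n x z = (if trace2 n (\<Sum>i\<in>UNIV. x i * z i) = 0 then 1 else -1)"

definition fourier :: "nat \<Rightarrow> (('i::finite \<Rightarrow> 'f::{field,finite}) \<Rightarrow> complex) \<Rightarrow> ('i \<Rightarrow> 'f) \<Rightarrow> complex" where
  "fourier n f z = (1 / complex_of_real (sqrt (2 ^ (n * CARD('i))))) *
       (\<Sum>x\<in>UNIV. f x * chi n x z)"

definition conv :: "(('i::finite \<Rightarrow> 'f::{field,finite}) \<Rightarrow> complex) \<Rightarrow> (('i \<Rightarrow> 'f) \<Rightarrow> complex) \<Rightarrow> ('i \<Rightarrow> 'f) \<Rightarrow> complex" where
  "conv f g x = (\<Sum>y\<in>UNIV. f y * g (x - y))"

text \<open>The set R = prod_i R_i, via the coordinate map psi : F_{2^n} -> F_2^n.\<close>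
definition rootset :: "('f \<Rightarrow> ('v \<Rightarrow> bit)) \<Rightarrow> ('i \<Rightarrow> 'v mpoly2) \<Rightarrow> ('i \<Rightarrow> 'f) set" where
  "rootset \<psi> P = {e. \<forall>i. \<psi> (e i) \<in> mroots (P i)}"

definition Wfun :: "('f \<Rightarrow> ('v \<Rightarrow> bit)) \<Rightarrow> ('i \<Rightarrow> 'v mpoly2) \<Rightarrow> ('i \<Rightarrow> 'f) \<Rightarrow> complex" where
  "Wfun \<psi> P e = (if e \<in> rootset \<psi> P
      then 1 / complex_of_real (sqrt (real (card (rootset \<psi> P)))) else 0)"

definition rs_code :: "('i \<Rightarrow> 'f::field) \<Rightarrow> nat \<Rightarrow> ('i \<Rightarrow> 'f) set" where
  "rs_code \<alpha> k = {c. \<exists>f::'f poly. (\<forall>j\<ge>k. coeff f j = 0) \<and> c = (\<lambda>i. poly f (\<alpha> i))}"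

definition badset :: "('i \<Rightarrow> 'f::field) set \<Rightarrow> (('i \<Rightarrow> 'f) \<Rightarrow> ('i \<Rightarrow> 'f)) \<Rightarrow> ('i \<Rightarrow> 'f) set" where
  "badset C Dec = {e. \<exists>x\<in>C. Dec (x + e) \<noteq> x}"

end

theory Submission imports Defs begin

text \<open>Translating every coordinate of the random polynomials by \<open>\<psi> (t i)\<close> translates the
  root set \<open>\<R>\<close> by \<open>-t\<close>, hence turns \<open>W\<^sup>\<P>\<close> into \<open>W\<^sup>\<P>(\<cdot> + t)\<close> and \<open>(B * W\<^sup>\<P>)(z)\<close> into
  \<open>(B * W\<^sup>\<P>)(z + t)\<close>. Since every \<open>\<P>\<^sub>i\<close> is shift-invariant and the \<open>p\<^sub>i\<close> are independent, the
  joint distribution is invariant under this translation, so the expectation at \<open>z\<close> equals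
  the one at \<open>z + t\<close>; take \<open>t = z' - z\<close>.\<close>

definition monomial_eval :: "('v \<Rightarrow>\<^sub>0 nat) \<Rightarrow> ('v \<Rightarrow> bit) \<Rightarrow> bit" where
  "monomial_eval m x = (\<Prod>v\<in>Poly_Mapping.keys m. x v ^ Poly_Mapping.lookup m v)"

lemma monomial_eval_superset:
  assumes "finite S" and "Poly_Mapping.keys m \<subseteq> S"
  shows "monomial_eval m x = (\<Prod>v\<in>S. x v ^ Poly_Mapping.lookup m v)"
  unfolding monomial_eval_def using assms
  by (intro prod.mono_neutral_left) (auto simp: in_keys_iff)

lemma monomial_eval_add: "monomial_eval (a + b) x = monomial_eval a x * monomial_eval b x"
proof -
  let ?S = "Poly_Mapping.keys a \<union> Poly_Mapping.keys b"
  have "monomial_eval (a + b) x = (\<Prod>v\<in>?S. x v ^ Poly_Mapping.lookup (a + b) v)"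
    using keys_add[of a b] by (intro monomial_eval_superset) auto
  also have "\<dots> = (\<Prod>v\<in>?S. x v ^ Poly_Mapping.lookup a v) * (\<Prod>v\<in>?S. x v ^ Poly_Mapping.lookup b v)"
    by (simp only: lookup_add power_add prod.distrib)
  also have "\<dots> = monomial_eval a x * monomial_eval b x"
    by (simp add: monomial_eval_superset[of ?S])
  finally show ?thesis .
qed

lemma mpoly_eval_superset:
  assumes "finite S" and "Poly_Mapping.keys p \<subseteq> S"
  shows "mpoly_eval p x = (\<Sum>m\<in>S. Poly_Mapping.lookup p m * monomial_eval m x)"
  unfolding mpoly_eval_def monomial_eval_def using assms
  by (intro sum.mono_neutral_left) (auto simp: in_keys_iff)

lemma mpoly_eval_add: "mpoly_eval (p + q) x = mpoly_eval p x + mpoly_eval q x"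
proof -
  let ?S = "Poly_Mapping.keys p \<union> Poly_Mapping.keys q"
  have "mpoly_eval (p + q) x = (\<Sum>m\<in>?S. Poly_Mapping.lookup (p + q) m * monomial_eval m x)"
    using keys_add[of p q] by (intro mpoly_eval_superset) auto
  also have "\<dots> = (\<Sum>m\<in>?S. Poly_Mapping.lookup p m * monomial_eval m x)
                + (\<Sum>m\<in>?S. Poly_Mapping.lookup q m * monomial_eval m x)"
    by (simp only: lookup_add distrib_right sum.distrib)
  also have "\<dots> = mpoly_eval p x + mpoly_eval q x"
    by (simp add: mpoly_eval_superset[of ?S])
  finally show ?thesis .
qed

lemma mpoly_eval_zero: "mpoly_eval 0 x = 0"
  by (simp add: mpoly_eval_def)

lemma mpoly_eval_sum: "mpoly_eval (sum f A) x = (\<Sum>a\<in>A. mpoly_eval (f a) x)"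
  by (induction A rule: infinite_finite_induct) (simp_all add: mpoly_eval_zero mpoly_eval_add)

lemma mpoly_eval_single: "mpoly_eval (Poly_Mapping.single m c) x = c * monomial_eval m x"
  by (cases "c = 0") (auto simp: mpoly_eval_def monomial_eval_def)

lemma poly_mapping_sum_single:
  "p = (\<Sum>m\<in>Poly_Mapping.keys p. Poly_Mapping.single m (Poly_Mapping.lookup p m))"
  by (rule poly_mapping_eqI) (simp add: lookup_sum lookup_single when_def in_keys_iff)

lemma mpoly_eval_single_mult:
  "mpoly_eval (Poly_Mapping.single m c * q) x = c * monomial_eval m x * mpoly_eval q x"
proof -
  have "mpoly_eval (Poly_Mapping.single m c * q) x
      = (\<Sum>m'\<in>Poly_Mapping.keys q.
           mpoly_eval (Poly_Mapping.single (m + m') (c * Poly_Mapping.lookup q m')) x)"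
    by (subst poly_mapping_sum_single[of q])
       (simp only: sum_distrib_left mult_single mpoly_eval_sum)
  also have "\<dots> = (\<Sum>m'\<in>Poly_Mapping.keys q.
                   c * monomial_eval m x * (Poly_Mapping.lookup q m' * monomial_eval m' x))"
    by (simp only: mpoly_eval_single monomial_eval_add mult_ac)
  also have "\<dots> = c * monomial_eval m x * mpoly_eval q x"
    by (simp only: mpoly_eval_def monomial_eval_def sum_distrib_left)
  finally show ?thesis .
qed

lemma mpoly_eval_mult: "mpoly_eval (p * q) x = mpoly_eval p x * mpoly_eval q x"
proof -
  have "mpoly_eval (p * q) x
      = (\<Sum>m\<in>Poly_Mapping.keys p. Poly_Mapping.lookup p m * monomial_eval m x * mpoly_eval q x)"
    by (subst poly_mapping_sum_single[of p])
       (simp only: sum_distrib_right mpoly_eval_sum mpoly_eval_single_mult)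
  also have "\<dots> = mpoly_eval p x * mpoly_eval q x"
    by (simp only: mpoly_eval_def monomial_eval_def sum_distrib_right)
  finally show ?thesis .
qed

lemma mpoly_eval_one: "mpoly_eval (1 :: 'v mpoly2) x = 1"
  by (simp add: mpoly_eval_def)

lemma mpoly_eval_power: "mpoly_eval (p ^ k) x = mpoly_eval p x ^ k"
  by (induction k) (simp_all add: mpoly_eval_one mpoly_eval_mult)

lemma mpoly_eval_prod: "mpoly_eval (prod f A) x = (\<Prod>a\<in>A. mpoly_eval (f a) x)"
  by (induction A rule: infinite_finite_induct) (auto simp: mpoly_eval_one mpoly_eval_mult)

lemma mpoly_eval_mconst: "mpoly_eval (mconst c) x = c"
  by (simp add: mconst_def mpoly_eval_single monomial_eval_def)

lemma mpoly_eval_mvar: "mpoly_eval (mvar v) x = x v"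
  by (simp add: mvar_def mpoly_eval_single monomial_eval_def)

lemma mpoly_eval_shift: "mpoly_eval (mpoly_shift s p) x = mpoly_eval p (x + s)"
  unfolding mpoly_shift_def
  by (simp only: mpoly_eval_sum mpoly_eval_mult mpoly_eval_prod mpoly_eval_power
      mpoly_eval_add mpoly_eval_mconst mpoly_eval_mvar) (simp only: mpoly_eval_def plus_fun_def)

lemma mroots_shift: "x \<in> mroots (mpoly_shift s p) \<longleftrightarrow> x + s \<in> mroots p"
  by (simp add: mroots_def mpoly_eval_shift)

lemma mpoly_shift_zero [simp]: "mpoly_shift s 0 = 0"
  by (simp add: mpoly_shift_def)

definition mpoly_shift_tuple :: "('i \<Rightarrow> 'v \<Rightarrow> bit) \<Rightarrow> ('i \<Rightarrow> 'v mpoly2) \<Rightarrow> 'i \<Rightarrow> 'v mpoly2" where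
  "mpoly_shift_tuple s P i = mpoly_shift (s i) (P i)"

lemma rootset_mpoly_shift_tuple:
  assumes "\<And>a b. \<psi> (a + b) = \<psi> a + \<psi> b"
  shows "e \<in> rootset \<psi> (mpoly_shift_tuple (\<lambda>i. \<psi> (t i)) P) \<longleftrightarrow> e + t \<in> rootset \<psi> P"
  by (simp add: rootset_def mpoly_shift_tuple_def mroots_shift assms)

lemma Wfun_mpoly_shift_tuple:
  fixes \<psi> :: "'f::ab_group_add \<Rightarrow> 'v \<Rightarrow> bit"
  assumes "\<And>a b. \<psi> (a + b) = \<psi> a + \<psi> b"
  shows "Wfun \<psi> (mpoly_shift_tuple (\<lambda>i. \<psi> (t i)) P) e = Wfun \<psi> P (e + t)"
proof -
  have "bij_betw (\<lambda>e. e + t) (rootset \<psi> (mpoly_shift_tuple (\<lambda>i. \<psi> (t i)) P)) (rootset \<psi> P)"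
    by (rule bij_betw_byWitness[where f' = "\<lambda>e. e - t"])
       (auto simp: rootset_mpoly_shift_tuple[OF assms])
  then have "card (rootset \<psi> (mpoly_shift_tuple (\<lambda>i. \<psi> (t i)) P)) = card (rootset \<psi> P)"
    by (rule bij_betw_same_card)
  then show ?thesis
    by (simp add: Wfun_def rootset_mpoly_shift_tuple[OF assms])
qed

lemma conv_translate: "conv f (\<lambda>e. g (e + t)) z = conv f g (z + t)"
  unfolding conv_def by (simp add: algebra_simps)

lemma Pi_pmf_map_dependent:
  assumes [simp]: "finite A" and "\<And>x. f x dflt = dflt"
  shows "Pi_pmf A dflt (\<lambda>x. map_pmf (f x) (g x))
       = map_pmf (\<lambda>h x. if x \<in> A then f x (h x) else dflt) (Pi_pmf A dflt g)"
proof -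
  have "Pi_pmf A dflt (\<lambda>x. map_pmf (f x) (g x))
      = Pi_pmf A dflt (\<lambda>x. g x \<bind> (\<lambda>y. return_pmf (f x y)))"
    by (simp add: map_pmf_def)
  also have "\<dots> = Pi_pmf A dflt g \<bind> (\<lambda>h. return_pmf (\<lambda>x. if x \<in> A then f x (h x) else dflt))"
    using assms(2) by (subst Pi_pmf_bind[where d' = dflt]) auto
  finally show ?thesis
    by (simp add: map_pmf_def)
qed

lemma Pi_pmf_mpoly_shift_tuple:
  assumes "\<And>i. shift_invariant (D i)"
  shows "map_pmf (mpoly_shift_tuple s) (Pi_pmf UNIV 0 D) = Pi_pmf (UNIV :: 'i::finite set) 0 D"
proof -
  have "map_pmf (mpoly_shift_tuple s) (Pi_pmf UNIV 0 D)
      = Pi_pmf UNIV 0 (\<lambda>i. map_pmf (mpoly_shift (s i)) (D i))"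
    by (subst Pi_pmf_map_dependent) (simp_all add: mpoly_shift_tuple_def [abs_def])
  then show ?thesis
    using assms by (simp add: shift_invariant_def)
qed

theorem mainTheorem4:
  fixes n k :: nat
    and \<psi> :: "'f::{field,finite} \<Rightarrow> ('v::finite \<Rightarrow> bit)"
    and \<alpha> :: "'i::finite \<Rightarrow> 'f"
    and Dec :: "('i \<Rightarrow> 'f) \<Rightarrow> ('i \<Rightarrow> 'f)"
    and B :: "('i \<Rightarrow> 'f) \<Rightarrow> complex"
    and D :: "'i \<Rightarrow> 'v mpoly2 pmf"
    and z z' :: "'i \<Rightarrow> 'f"
  assumes "CARD('v) = n"
    and "CARD('f) = 2 ^ n"
    and "bij \<psi>"
    and "\<And>a b. \<psi> (a + b) = \<psi> a + \<psi> b"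
    and "inj \<alpha>"
    and "\<And>y. Dec y \<in> rs_code \<alpha> k"
    and "fourier n B = indicator (badset (rs_code \<alpha> k) Dec)"
    and "\<And>i. shift_invariant (D i)"
  shows "measure_pmf.expectation (Pi_pmf UNIV 0 D) (\<lambda>P. (cmod (conv B (Wfun \<psi> P) z))\<^sup>2)
       = measure_pmf.expectation (Pi_pmf UNIV 0 D) (\<lambda>P. (cmod (conv B (Wfun \<psi> P) z'))\<^sup>2)"
proof -
  define t where "t = z' - z"
  define shift where "shift = mpoly_shift_tuple (\<lambda>i. \<psi> (t i))"
  have "z + t = z'"
    by (simp add: t_def)
  have "Wfun \<psi> (shift P) = (\<lambda>e. Wfun \<psi> P (e + t))" for P
    by (simp add: fun_eq_iff shift_def Wfun_mpoly_shift_tuple[OF assms(4)])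
  then have conv_shift: "conv B (Wfun \<psi> (shift P)) z = conv B (Wfun \<psi> P) z'" for P
    by (simp add: conv_translate \<open>z + t = z'\<close>)
  have "measure_pmf.expectation (Pi_pmf UNIV 0 D) (\<lambda>P. (cmod (conv B (Wfun \<psi> P) z))\<^sup>2)
      = measure_pmf.expectation (map_pmf shift (Pi_pmf UNIV 0 D))
          (\<lambda>P. (cmod (conv B (Wfun \<psi> P) z))\<^sup>2)"
    by (simp only: shift_def Pi_pmf_mpoly_shift_tuple[OF assms(8)])
  also have "\<dots> = measure_pmf.expectation (Pi_pmf UNIV 0 D) (\<lambda>P. (cmod (conv B (Wfun \<psi> P) z'))\<^sup>2)"
    by (simp only: integral_map_pmf conv_shift)
  finally show ?thesis .
qed

end
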